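(* Let $w$ be a positive integer, $x$ an integer with $0\le x\le p-1$, and $h$ a non-negative integer. If $T_n(x)\equiv x\pmod p$ and $T'_n(x)\equiv 1\pmod{p^w}$, then $T_n(x+hp)\equiv x+hp\pmod{p^t}$ for every integer $t$ with $1\le t\le w+1$.
   Context: $p$ is a prime with $p>3$ and $n>1$ is an integer with $\gcd(n,p)=\gcd(n,p^2-1)=1$. $T_n(x)\in\mathbb{Z}[x]$ is the Chebyshev polynomial of the first kind: $T_0=1$, $T_1=x$, $T_d=2xT_{d-1}-T_{d-2}$; $T'_n$ is its derivative. *)

theory Defs
  imports "HOL-Computational_Algebra.Polynomial" "HOL-Number_Theory.Number_Theory"
begin

fun cheb_T :: "nat \<Rightarrow> int poly" where
  "cheb_T 0 = 1"
| "cheb_T (Suc 0) = [:0, 1:]"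
| "cheb_T (Suc (Suc d)) = [:0, 2:] * cheb_T (Suc d) - cheb_T d"

end

theory Submission
  imports Defs
begin

(* Write n = 2b + 1 (n is odd, being prime to p^2 - 1) and let V_m = U_(m-1), so that T_m' = m V_m.
   Then T_n(X) - X = 2 (X^2 - 1) V_(b+1) V_b, and n V_n(x) - 1, which p^w divides, equals
   a V_j(x) + 2j up to sign, for j = b and for j = b + 1 (with a depending on j).
   Two p-adic facts about V drive the argument: if p does not divide u^2 - 1 and p divides
   V_(p^s k)(u), then so does p^(s+1); if p divides u^2 - 1, then V_(p^s k)(u) = p^s V_k(u)
   mod p^(s+1).  When p does not divide x^2 - 1, p divides V_j(x) for one of the two j, the
   first fact yields p^s | j for s = 1, ..., w in turn, and then p^(w+1) | V_j(y) for all
   y = x mod p.  When x = +-1 mod p, the hypothesis gives n = +-1 mod p, i.e. p | j for one j;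
   the second fact again yields p^w | j, hence p^w | V_j(y), and p | y^2 - 1 supplies the
   last factor p. *)

section \<open>Chebyshev polynomial identities\<close>

(* cheb_V m is the Chebyshev polynomial U_(m-1) of the second kind. *)
fun cheb_V :: "nat \<Rightarrow> int poly" where
  "cheb_V 0 = 0"
| "cheb_V (Suc 0) = 1"
| "cheb_V (Suc (Suc d)) = [:0, 2:] * cheb_V (Suc d) - cheb_V d"

lemma poly_cheb_T_Suc_Suc [simp]:
  "poly (cheb_T (Suc (Suc d))) t = 2 * t * poly (cheb_T (Suc d)) t - poly (cheb_T d) t"
  by simp

lemma poly_cheb_V_Suc_Suc [simp]:
  "poly (cheb_V (Suc (Suc d))) t = 2 * t * poly (cheb_V (Suc d)) t - poly (cheb_V d) t"
  by simp

lemma poly_cheb_T_eq_cheb_V: "poly (cheb_T m) t = poly (cheb_V (Suc m)) t - t * poly (cheb_V m) t"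
proof (induction m rule: cheb_T.induct)
  case (3 d)
  show ?case
    by (simp only: poly_cheb_T_Suc_Suc 3) (simp add: algebra_simps)
qed simp_all

lemma pderiv_cheb_T: "pderiv (cheb_T m) = of_nat m * cheb_V m"
proof (induction m rule: cheb_T.induct)
  case (3 d)
  have "poly (pderiv (cheb_T (Suc (Suc d)))) t = poly (of_nat (Suc (Suc d)) * cheb_V (Suc (Suc d))) t"
    for t
    using 3 by (simp add: pderiv_mult pderiv_diff pderiv_pCons pderiv_smult
        poly_cheb_T_eq_cheb_V[of "Suc d"] algebra_simps)
  then show ?case
    by (simp add: poly_eq_poly_eq_iff[symmetric] fun_eq_iff
        del: poly_cheb_T_Suc_Suc poly_cheb_V_Suc_Suc)
qed (simp_all add: pderiv_pCons)

lemma poly_cheb_at_unit: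
  fixes \<sigma> :: int
  assumes "\<sigma>\<^sup>2 = 1"
  shows "poly (cheb_T m) \<sigma> = \<sigma> ^ m \<and> poly (cheb_V m) \<sigma> = \<sigma> ^ Suc m * int m"
proof (induction m rule: cheb_T.induct)
  case (3 d)
  have "\<sigma> ^ Suc (Suc k) = \<sigma> ^ k" for k
    using assms by (simp add: power2_eq_square)
  with 3 show ?case by (simp add: algebra_simps)
qed (use assms in \<open>simp_all add: power2_eq_square\<close>)

lemma cheb_closed_form:
  fixes t :: int and s :: real
  assumes s: "s\<^sup>2 = (of_int t)\<^sup>2 - 1"
  shows "2 * of_int (poly (cheb_T m) t) = (of_int t + s) ^ m + (of_int t - s) ^ m
       \<and> 2 * s * of_int (poly (cheb_V m) t) = (of_int t + s) ^ m - (of_int t - s) ^ m"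
proof (induction m rule: cheb_T.induct)
  case (3 d)
  define r where "r = real_of_int t"
  have rec: "(r + c) ^ Suc (Suc d) = 2 * r * (r + c) ^ Suc d - (r + c) ^ d" if "c\<^sup>2 = s\<^sup>2" for c
  proof -
    have "(r + c)\<^sup>2 = 2 * r * (r + c) - 1"
      using that s by (simp add: r_def power2_eq_square algebra_simps)
    then have "(r + c)\<^sup>2 * (r + c) ^ d = (2 * r * (r + c) - 1) * (r + c) ^ d" by simp
    then show ?thesis by (simp add: power2_eq_square algebra_simps)
  qed
  define A B where "A = r + s" and "B = r - s"
  have A: "A ^ Suc (Suc d) = 2 * r * A ^ Suc d - A ^ d"
    and B: "B ^ Suc (Suc d) = 2 * r * B ^ Suc d - B ^ d"
    using rec[of s] rec[of "- s"] by (simp_all add: A_def B_def)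
  have IH: "2 * of_int (poly (cheb_T (Suc d)) t) = A ^ Suc d + B ^ Suc d"
    "2 * s * of_int (poly (cheb_V (Suc d)) t) = A ^ Suc d - B ^ Suc d"
    "2 * of_int (poly (cheb_T d) t) = A ^ d + B ^ d"
    "2 * s * of_int (poly (cheb_V d) t) = A ^ d - B ^ d"
    using 3 by (simp_all add: A_def B_def r_def)
  have "2 * of_int (poly (cheb_T (Suc (Suc d))) t)
      = 2 * r * (2 * of_int (poly (cheb_T (Suc d)) t)) - 2 * of_int (poly (cheb_T d) t)"
    by (simp add: r_def algebra_simps)
  also have "\<dots> = A ^ Suc (Suc d) + B ^ Suc (Suc d)"
    unfolding A B IH by (simp add: algebra_simps)
  finally have T: "2 * of_int (poly (cheb_T (Suc (Suc d))) t) = A ^ Suc (Suc d) + B ^ Suc (Suc d)" .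
  have "2 * s * of_int (poly (cheb_V (Suc (Suc d))) t)
      = 2 * r * (2 * s * of_int (poly (cheb_V (Suc d)) t)) - 2 * s * of_int (poly (cheb_V d) t)"
    by (simp add: r_def algebra_simps)
  also have "\<dots> = A ^ Suc (Suc d) - B ^ Suc (Suc d)"
    unfolding A B IH by (simp add: algebra_simps)
  finally show ?case using T by (simp add: A_def B_def r_def)
qed (simp_all add: algebra_simps)

(* Integer polynomial identities are checked at the integers t >= 2, where
   2 T_m(t) = z^m + z'^m and 2 s V_m(t) = z^m - z'^m with s = sqrt(t^2 - 1), z = t + s, z' = t - s. *)

lemma int_poly_eq_from_ge2:
  fixes P Q :: "int poly"
  assumes "\<And>u. 2 \<le> u \<Longrightarrow> poly P u = poly Q u"
  shows "poly P t = poly Q t"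
proof -
  have "{2..} \<subseteq> {u. poly (P - Q) u = 0}"
    using assms by auto
  then have "P - Q = 0"
    using poly_roots_finite infinite_Ici finite_subset by metis
  then show ?thesis by simp
qed

locale cheb_point =
  fixes t :: int
  assumes two_le: "2 \<le> t"
begin

definition s :: real where "s = sqrt ((of_int t)\<^sup>2 - 1)"
definition z :: real where "z = of_int t + s"
definition z' :: real where "z' = of_int t - s"

lemma four_le_square: "4 \<le> (real_of_int t)\<^sup>2"
proof -
  have "(2::real) * 2 \<le> of_int t * of_int t"
    using two_le by (intro mult_mono) simp_all
  then show ?thesis by (simp add: power2_eq_square)
qed

lemma s_squared: "s\<^sup>2 = (of_int t)\<^sup>2 - 1"
  using four_le_square by (simp add: s_def)

lemma s_nonzero: "s \<noteq> 0"
  using s_squared four_le_square by auto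

lemma z_plus_z': "z + z' = 2 * of_int t"
  by (simp add: z_def z'_def)

lemma z_minus_z': "z - z' = 2 * s"
  by (simp add: z_def z'_def)

lemma z_pow_z'_pow: "z ^ m * z' ^ m = 1"
proof -
  have "z * z' = 1"
    using s_squared by (simp add: z_def z'_def power2_eq_square algebra_simps)
  then show ?thesis by (metis power_mult_distrib power_one)
qed

lemma cheb_T_closed: "2 * of_int (poly (cheb_T m) t) = z ^ m + z' ^ m"
  using cheb_closed_form[OF s_squared] by (simp add: z_def z'_def)

lemma cheb_V_closed: "2 * s * of_int (poly (cheb_V m) t) = z ^ m - z' ^ m"
  using cheb_closed_form[OF s_squared] by (simp add: z_def z'_def)

end

lemma cheb_pell: "poly (cheb_T m) t ^ 2 - 1 = (t\<^sup>2 - 1) * poly (cheb_V m) t ^ 2"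
proof -
  have "poly (cheb_T m ^ 2 - 1) t = poly ([:-1, 0, 1:] * cheb_V m ^ 2) t"
  proof (rule int_poly_eq_from_ge2)
    fix u :: int
    assume "2 \<le> u"
    then interpret cheb_point u by unfold_locales
    have "4 * of_int (poly (cheb_T m ^ 2 - 1) u) = (z ^ m + z' ^ m)\<^sup>2 - 4"
      by (simp flip: cheb_T_closed add: power2_eq_square algebra_simps)
    also have "\<dots> = (z ^ m - z' ^ m)\<^sup>2"
      using z_pow_z'_pow[of m] by (simp add: power2_eq_square algebra_simps)
    also have "\<dots> = 4 * s\<^sup>2 * (of_int (poly (cheb_V m) u))\<^sup>2"
      by (simp flip: cheb_V_closed add: power_mult_distrib)
    also have "\<dots> = 4 * of_int (poly ([:-1, 0, 1:] * cheb_V m ^ 2) u)"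
      unfolding s_squared by (simp add: power2_eq_square algebra_simps)
    finally show "poly (cheb_T m ^ 2 - 1) u = poly ([:-1, 0, 1:] * cheb_V m ^ 2) u"
      by (simp only: mult_cancel_left of_int_eq_iff) simp
  qed
  then show ?thesis by (simp add: power2_eq_square algebra_simps)
qed

lemma cheb_V_mult:
  "poly (cheb_V (a * b)) t = poly (cheb_V a) t * poly (cheb_V b) (poly (cheb_T a) t)"
proof -
  have "poly (cheb_V (a * b)) t = poly (cheb_V a * pcompose (cheb_V b) (cheb_T a)) t"
  proof (rule int_poly_eq_from_ge2)
    fix u :: int
    assume "2 \<le> u"
    then interpret cheb_point u by unfold_locales
    define t' where "t' = poly (cheb_T a) u"
    define s' where "s' = s * of_int (poly (cheb_V a) u)"
    have "real_of_int (t'\<^sup>2 - 1) = of_int ((u\<^sup>2 - 1) * poly (cheb_V a) u ^ 2)"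
      unfolding t'_def cheb_pell ..
    then have "s'\<^sup>2 = (of_int t')\<^sup>2 - 1"
      by (simp add: s'_def power_mult_distrib s_squared)
    note closed = cheb_closed_form[OF this, of b]
    have "of_int t' + s' = z ^ a" "of_int t' - s' = z' ^ a"
      using cheb_T_closed[of a] cheb_V_closed[of a] by (simp_all add: t'_def s'_def algebra_simps)
    then have "2 * s * of_int (poly (cheb_V (a * b)) u) = 2 * s' * of_int (poly (cheb_V b) t')"
      using closed by (simp add: cheb_V_closed power_mult)
    also have "\<dots> = 2 * s * of_int (poly (cheb_V a * pcompose (cheb_V b) (cheb_T a)) u)"
      by (simp add: s'_def t'_def poly_pcompose)
    finally show "poly (cheb_V (a * b)) u = poly (cheb_V a * pcompose (cheb_V b) (cheb_T a)) u"
      using s_nonzero by (simp only: mult_cancel_left of_int_eq_iff) simp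
  qed
  then show ?thesis by (simp add: poly_pcompose)
qed

lemma cheb_T_odd_minus_id:
  "poly (cheb_T (Suc (2 * b))) t - t = 2 * (t\<^sup>2 - 1) * poly (cheb_V (Suc b)) t * poly (cheb_V b) t"
proof -
  have "poly (cheb_T (Suc (2 * b)) - [:0, 1:]) t
      = poly (2 * ([:-1, 0, 1:] * cheb_V (Suc b) * cheb_V b)) t"
  proof (rule int_poly_eq_from_ge2)
    fix u :: int
    assume "2 \<le> u"
    then interpret cheb_point u by unfold_locales
    define Z W where "Z = z ^ b" and "W = z' ^ b"
    have "2 * of_int (poly (cheb_T (Suc (2 * b)) - [:0, 1:]) u) = z * Z\<^sup>2 + z' * W\<^sup>2 - (z + z')"
      by (simp add: Z_def W_def cheb_T_closed power_even_eq right_diff_distrib flip: z_plus_z')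
    also have "\<dots> = (z * Z - z' * W) * (Z - W) + (z + z') * (Z * W - 1)"
      by (simp add: power2_eq_square algebra_simps)
    also have "\<dots> = (2 * s * of_int (poly (cheb_V (Suc b)) u)) * (2 * s * of_int (poly (cheb_V b) u))"
      by (simp add: cheb_V_closed Z_def W_def z_pow_z'_pow)
    also have "\<dots> = 4 * s\<^sup>2 * of_int (poly (cheb_V (Suc b)) u) * of_int (poly (cheb_V b) u)"
      by (simp add: power2_eq_square algebra_simps)
    also have "\<dots> = 2 * of_int (poly (2 * ([:-1, 0, 1:] * cheb_V (Suc b) * cheb_V b)) u)"
      unfolding s_squared by (simp add: power2_eq_square algebra_simps)
    finally show "poly (cheb_T (Suc (2 * b)) - [:0, 1:]) u
        = poly (2 * ([:-1, 0, 1:] * cheb_V (Suc b) * cheb_V b)) u"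
      by (simp only: mult_cancel_left of_int_eq_iff) simp
  qed
  then show ?thesis by (simp add: power2_eq_square algebra_simps)
qed

lemma cheb_V_odd:
  "poly (cheb_V (Suc (2 * b))) t = 2 * poly (cheb_V (Suc b)) t * poly (cheb_T b) t - 1"
  "poly (cheb_V (Suc (2 * b))) t = 2 * poly (cheb_T (Suc b)) t * poly (cheb_V b) t + 1"
proof -
  have at_ge2: "poly (cheb_V (Suc (2 * b))) u = poly (2 * (cheb_V (Suc b) * cheb_T b) - 1) u
      \<and> poly (cheb_V (Suc (2 * b))) u = poly (2 * (cheb_T (Suc b) * cheb_V b) + 1) u"
    if "2 \<le> u" for u
  proof -
    interpret cheb_point u using that by unfold_locales
    define Z W where "Z = z ^ b" and "W = z' ^ b"
    have "2 * s * of_int (poly (cheb_V (Suc (2 * b))) u) = z * Z\<^sup>2 - z' * W\<^sup>2"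
      by (simp add: cheb_V_closed Z_def W_def power_even_eq)
    also have "\<dots> = (z * Z - z' * W) * (Z + W) - (z - z') - (z - z') * (Z * W - 1)"
      by (simp add: power2_eq_square algebra_simps)
    also have "\<dots>
        = (2 * s * of_int (poly (cheb_V (Suc b)) u)) * (2 * of_int (poly (cheb_T b) u)) - 2 * s"
      by (simp add: cheb_V_closed cheb_T_closed Z_def W_def z_pow_z'_pow z_minus_z')
    also have "\<dots> = 2 * s * of_int (poly (2 * (cheb_V (Suc b) * cheb_T b) - 1) u)"
      by (simp add: algebra_simps)
    finally have 1: "poly (cheb_V (Suc (2 * b))) u = poly (2 * (cheb_V (Suc b) * cheb_T b) - 1) u"
      using s_nonzero by (simp only: mult_cancel_left of_int_eq_iff) simp
    have "2 * s * of_int (poly (cheb_V (Suc (2 * b))) u) = z * Z\<^sup>2 - z' * W\<^sup>2"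
      by (simp add: cheb_V_closed Z_def W_def power_even_eq)
    also have "\<dots> = (z * Z + z' * W) * (Z - W) + (z - z') + (z - z') * (Z * W - 1)"
      by (simp add: power2_eq_square algebra_simps)
    also have "\<dots>
        = (2 * of_int (poly (cheb_T (Suc b)) u)) * (2 * s * of_int (poly (cheb_V b) u)) + 2 * s"
      by (simp add: cheb_V_closed cheb_T_closed Z_def W_def z_pow_z'_pow z_minus_z')
    also have "\<dots> = 2 * s * of_int (poly (2 * (cheb_T (Suc b) * cheb_V b) + 1) u)"
      by (simp add: algebra_simps)
    finally have 2: "poly (cheb_V (Suc (2 * b))) u = poly (2 * (cheb_T (Suc b) * cheb_V b) + 1) u"
      using s_nonzero by (simp only: mult_cancel_left of_int_eq_iff) simp
    from 1 2 show ?thesis ..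
  qed
  have "poly (cheb_V (Suc (2 * b))) t = poly (2 * (cheb_V (Suc b) * cheb_T b) - 1) t"
    by (rule int_poly_eq_from_ge2) (use at_ge2 in blast)
  moreover have "poly (cheb_V (Suc (2 * b))) t = poly (2 * (cheb_T (Suc b) * cheb_V b) + 1) t"
    by (rule int_poly_eq_from_ge2) (use at_ge2 in blast)
  ultimately show "poly (cheb_V (Suc (2 * b))) t = 2 * poly (cheb_V (Suc b)) t * poly (cheb_T b) t - 1"
    and "poly (cheb_V (Suc (2 * b))) t = 2 * poly (cheb_T (Suc b)) t * poly (cheb_V b) t + 1"
    by simp_all
qed

lemma power_plus_minus_neg_power:
  fixes a :: "'a::comm_ring_1"
  shows "a ^ k + (- a) ^ k = (if even k then 2 else 0) * (a\<^sup>2) ^ (k div 2)"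
    and "a ^ k - (- a) ^ k = (if odd k then 2 else 0) * a * (a\<^sup>2) ^ (k div 2)"
  by (cases "even k"; auto elim!: evenE oddE simp: power_mult)+

lemma cheb_T_binomial:
  "2 * poly (cheb_T m) t
    = (\<Sum>k\<le>m. int (m choose k) * (if even k then 2 else 0) * t ^ (m - k) * (t\<^sup>2 - 1) ^ (k div 2))"
proof -
  let ?Q = "\<Sum>k\<le>m. of_nat (m choose k) * [:if even k then 2 else 0:]
    * [:0, 1:] ^ (m - k) * ([:0, 1:]\<^sup>2 - 1) ^ (k div 2)"
  have "poly (2 * cheb_T m) t = poly ?Q t"
  proof (rule int_poly_eq_from_ge2)
    fix u :: int
    assume "2 \<le> u"
    then interpret cheb_point u by unfold_locales
    have "of_int (poly (2 * cheb_T m) u) = (s + of_int u) ^ m + (- s + of_int u) ^ m"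
      using cheb_T_closed[of m] by (simp add: z_def z'_def add.commute)
    also have "\<dots> = (\<Sum>k\<le>m. of_nat (m choose k) * s ^ k * of_int u ^ (m - k))
        + (\<Sum>k\<le>m. of_nat (m choose k) * (- s) ^ k * of_int u ^ (m - k))"
      by (simp only: binomial_ring)
    also have "\<dots> = (\<Sum>k\<le>m. of_nat (m choose k) * (s ^ k + (- s) ^ k) * of_int u ^ (m - k))"
      by (simp add: sum.distrib[symmetric] algebra_simps)
    also have "\<dots> = of_int (poly ?Q u)"
      unfolding power_plus_minus_neg_power s_squared
      by (auto simp: poly_sum algebra_simps intro!: sum.cong)
    finally show "poly (2 * cheb_T m) u = poly ?Q u"
      by (simp only: of_int_eq_iff)
  qed
  then show ?thesis by (simp add: poly_sum mult_ac)
qed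

lemma cheb_V_binomial:
  "2 * poly (cheb_V m) t
    = (\<Sum>k\<le>m. int (m choose k) * (if odd k then 2 else 0) * t ^ (m - k) * (t\<^sup>2 - 1) ^ (k div 2))"
proof -
  let ?Q = "\<Sum>k\<le>m. of_nat (m choose k) * [:if odd k then 2 else 0:]
    * [:0, 1:] ^ (m - k) * ([:0, 1:]\<^sup>2 - 1) ^ (k div 2)"
  have "poly (2 * cheb_V m) t = poly ?Q t"
  proof (rule int_poly_eq_from_ge2)
    fix u :: int
    assume "2 \<le> u"
    then interpret cheb_point u by unfold_locales
    have "s * of_int (poly (2 * cheb_V m) u) = (s + of_int u) ^ m - (- s + of_int u) ^ m"
      using cheb_V_closed[of m] by (simp add: z_def z'_def add.commute mult.assoc)
    also have "\<dots> = (\<Sum>k\<le>m. of_nat (m choose k) * s ^ k * of_int u ^ (m - k))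
        - (\<Sum>k\<le>m. of_nat (m choose k) * (- s) ^ k * of_int u ^ (m - k))"
      by (simp only: binomial_ring)
    also have "\<dots> = (\<Sum>k\<le>m. of_nat (m choose k) * (s ^ k - (- s) ^ k) * of_int u ^ (m - k))"
      by (simp add: sum_subtractf[symmetric] algebra_simps)
    also have "\<dots> = s * of_int (poly ?Q u)"
      unfolding power_plus_minus_neg_power s_squared
      by (auto simp: poly_sum sum_distrib_left algebra_simps intro!: sum.cong)
    finally show "poly (2 * cheb_V m) u = poly ?Q u"
      using s_nonzero by (simp only: mult_cancel_left of_int_eq_iff) simp
  qed
  then show ?thesis by (simp add: poly_sum mult_ac)
qed

section \<open>Congruences modulo powers of p\<close>

lemma power_unit_parity:
  fixes \<sigma> :: int
  assumes "\<sigma>\<^sup>2 = 1"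
  shows "\<sigma> ^ m = (if even m then 1 else \<sigma>)"
  using assms by (cases "even m") (auto elim!: evenE oddE simp: power_mult)

lemma dvd_square_minus_one_if_cong_unit:
  fixes \<sigma> :: int
  assumes "\<sigma>\<^sup>2 = 1" and "[x = \<sigma>] (mod m)"
  shows "m dvd x\<^sup>2 - 1"
  using cong_pow[OF assms(2), of 2] assms(1) by (simp add: cong_iff_dvd_diff)

lemma cong_poly:
  fixes P :: "int poly"
  assumes "[a = b] (mod m)"
  shows "[poly P a = poly P b] (mod m)"
  by (induction P) (simp_all add: assms cong_add cong_mult)

lemma int_fermat_little:
  assumes "prime p"
  shows "[t ^ p = t] (mod int p)"
proof -
  have p: "p > 0"
    using assms by (rule prime_gt_0_nat)
  define u where "u = nat (t mod int p)"
  have tu: "[t = int u] (mod int p)"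
    using p by (simp add: u_def cong_def)
  have "[u ^ p = u] (mod p)"
  proof (cases "p dvd u")
    case True
    then have "[u = 0] (mod p)"
      by (simp add: cong_0_iff)
    moreover from this have "[u ^ p = 0 ^ p] (mod p)"
      by (rule cong_pow)
    ultimately show ?thesis
      using p by (metis cong_sym cong_trans power_0_left not_gr0)
  next
    case False
    have "[u ^ (p - 1) * u = 1 * u] (mod p)"
      using fermat_theorem[OF assms False] by (rule cong_scalar_right)
    then show ?thesis
      using p by (simp flip: power_Suc2)
  qed
  then have "[int u ^ p = int u] (mod int p)"
    by (simp flip: cong_int_iff)
  with tu show ?thesis
    by (meson cong_pow cong_sym cong_trans)
qed

lemma cheb_T_prime_cong:
  assumes "prime p" and "odd p"
  shows "[poly (cheb_T p) t = t] (mod int p)"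
proof -
  have summand: "[int (p choose k) * (if even k then 2 else 0) * t ^ (p - k) * (t\<^sup>2 - 1) ^ (k div 2)
      = (if k = 0 then 2 * t ^ p else 0)] (mod int p)" if k_le: "k \<le> p" for k
  proof -
    consider "k = 0" | "k = p" | "0 < k" "k < p"
      using k_le by (cases "k = 0"; cases "k = p") auto
    then show ?thesis
    proof cases
      case 3
      then have "int p dvd int (p choose k)"
        using dvd_choose_prime[of k p] assms(1) by simp
      then show ?thesis
        using 3 by (simp add: cong_0_iff)
    qed (use assms in auto)
  qed
  have "[2 * poly (cheb_T p) t = (\<Sum>k\<le>p. if k = 0 then 2 * t ^ p else 0)] (mod int p)"
    unfolding cheb_T_binomial using summand by (intro cong_sum) simp
  also have "(\<Sum>k\<le>p. if k = 0 then 2 * t ^ p else 0) = 2 * t ^ p"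
    by simp
  also have "[2 * t ^ p = 2 * t] (mod int p)"
    using int_fermat_little[OF assms(1)] by (rule cong_scalar_left)
  finally show ?thesis
    using assms(2) by (simp add: cong_mult_lcancel)
qed

lemma cheb_V_prime_cong:
  assumes "prime p" and "p > 3" and "int p dvd t\<^sup>2 - 1"
  shows "[poly (cheb_V p) t = int p] (mod int p ^ 2)"
proof -
  have odd_p: "odd p"
    using assms prime_odd_nat by auto
  have p_sq: "int p ^ 2 dvd (t\<^sup>2 - 1) ^ (p div 2)"
  proof -
    have "int p ^ 2 dvd (t\<^sup>2 - 1) ^ 2"
      using assms(3) by simp
    also have "(t\<^sup>2 - 1) ^ 2 dvd (t\<^sup>2 - 1) ^ (p div 2)"
      using assms(2) odd_p by (intro le_imp_power_dvd) presburger
    finally show ?thesis .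
  qed
  have summand: "[int (p choose k) * (if odd k then 2 else 0) * t ^ (p - k) * (t\<^sup>2 - 1) ^ (k div 2)
      = (if k = 1 then 2 * int p * t ^ (p - 1) else 0)] (mod int p ^ 2)" if k_le: "k \<le> p" for k
  proof -
    consider "even k" | "k = 1" | "k = p" | "odd k" "1 < k" "k < p"
      using k_le by (cases "even k"; cases "k = 1"; cases "k = p") (auto elim: oddE)
    then show ?thesis
    proof cases
      case 3
      then show ?thesis
        using odd_p p_sq assms(2) by (simp add: cong_0_iff)
    next
      case 4
      have "int p dvd int (p choose k)"
        using dvd_choose_prime[of k p] assms(1) 4 by simp
      moreover have "int p dvd (t\<^sup>2 - 1) ^ (k div 2)"
        using 4 by (intro dvd_trans[OF assms(3)] dvd_power) auto
      ultimately have "int p ^ 2 dvd int (p choose k) * (t\<^sup>2 - 1) ^ (k div 2) * (2 * t ^ (p - k))"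
        by (simp add: power2_eq_square mult_dvd_mono dvd_mult2)
      then show ?thesis
        using 4 by (simp add: cong_0_iff ac_simps)
    qed (auto simp: ac_simps)
  qed
  have "[2 * poly (cheb_V p) t = (\<Sum>k\<le>p. if k = 1 then 2 * int p * t ^ (p - 1) else 0)] (mod int p ^ 2)"
    unfolding cheb_V_binomial using summand by (intro cong_sum) simp
  also have "(\<Sum>k\<le>p. if k = 1 then 2 * int p * t ^ (p - 1) else 0) = 2 * (int p * t ^ (p - 1))"
    using odd_p by (cases p) auto
  also have "[2 * (int p * t ^ (p - 1)) = 2 * int p] (mod int p ^ 2)"
  proof -
    have "[t\<^sup>2 = 1] (mod int p)"
      using assms(3) by (simp add: cong_iff_dvd_diff)
    then have "[(t\<^sup>2) ^ (p div 2) = 1] (mod int p)"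
      using cong_pow by fastforce
    moreover have "(t\<^sup>2) ^ (p div 2) = t ^ (p - 1)"
      using odd_p by (simp flip: power_mult)
    ultimately have "[int p * t ^ (p - 1) = int p * 1] (mod int p * int p)"
      by (intro cong_cmult_leftI) simp
    then show ?thesis
      by (simp add: power2_eq_square cong_scalar_left)
  qed
  finally show ?thesis
    using odd_p by (simp add: cong_mult_lcancel)
qed

lemma cong_mult_prime_power_lift:
  fixes q a b :: int
  assumes "[a = q] (mod q\<^sup>2)" and "[b = q ^ s] (mod q ^ Suc s)"
  shows "[a * b = q ^ Suc s] (mod q ^ Suc (Suc s))"
proof -
  obtain \<alpha> where a: "a = q + q\<^sup>2 * \<alpha>"
    using assms(1) by (metis cong_iff_dvd_diff dvd_def diff_eq_eq add.commute)
  obtain \<beta> where b: "b = q ^ s + q ^ Suc s * \<beta>"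
    using assms(2) by (metis cong_iff_dvd_diff dvd_def diff_eq_eq add.commute)
  have "a * b - q ^ Suc s = q ^ Suc (Suc s) * (\<beta> + \<alpha> + q * \<alpha> * \<beta>)"
    unfolding a b by (simp add: power2_eq_square algebra_simps)
  then show ?thesis
    by (simp add: cong_iff_dvd_diff)
qed

lemma cheb_V_prime_power_cong:
  assumes "prime p" and "p > 3" and "int p dvd t\<^sup>2 - 1"
  shows "[poly (cheb_V (p ^ s)) t = int p ^ s] (mod int p ^ Suc s)"
  using assms(3)
proof (induction s arbitrary: t)
  case (Suc s)
  define t' where "t' = poly (cheb_T p) t"
  have "int p dvd t'\<^sup>2 - 1"
    using Suc.prems unfolding t'_def cheb_pell by simp
  then have "[poly (cheb_V (p ^ s)) t' = int p ^ s] (mod int p ^ Suc s)"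
    by (rule Suc.IH)
  moreover have "[poly (cheb_V p) t = int p] (mod int p ^ 2)"
    using assms(1,2) Suc.prems by (rule cheb_V_prime_cong)
  moreover have "poly (cheb_V (p ^ Suc s)) t = poly (cheb_V p) t * poly (cheb_V (p ^ s)) t'"
    unfolding t'_def power_Suc by (rule cheb_V_mult)
  ultimately show ?case
    by (metis cong_mult_prime_power_lift)
qed simp

lemma dvd_square_minus_one_if_dvd_cheb_V_prime:
  assumes "prime p" and "odd p" and "int p dvd poly (cheb_V p) t"
  shows "int p dvd t\<^sup>2 - 1"
proof -
  have "[t\<^sup>2 - 1 = (poly (cheb_T p) t)\<^sup>2 - 1] (mod int p)"
    using cong_sym[OF cheb_T_prime_cong[OF assms(1,2)]] by (intro cong_diff cong_pow) simp_all
  also have "(poly (cheb_T p) t)\<^sup>2 - 1 = (t\<^sup>2 - 1) * (poly (cheb_V p) t)\<^sup>2"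
    by (rule cheb_pell)
  also have "[\<dots> = 0] (mod int p)"
    using assms(3) by (simp add: cong_0_iff power2_eq_square)
  finally show ?thesis
    by (simp add: cong_0_iff)
qed

lemma dvd_cheb_V_if_dvd_cheb_V_prime_power_mult:
  assumes "prime p" and "odd p" and "\<not> int p dvd u\<^sup>2 - 1"
    and "int p dvd poly (cheb_V (p ^ s * k)) u"
  shows "int p dvd poly (cheb_V k) u"
  using assms(4)
proof (induction s)
  case (Suc s)
  have prime: "prime (int p)"
    using assms(1) by simp
  define t' where "t' = poly (cheb_T (p ^ s * k)) u"
  have split: "poly (cheb_V (p ^ Suc s * k)) u = poly (cheb_V (p ^ s * k)) u * poly (cheb_V p) t'"
    using cheb_V_mult[of "p ^ s * k" p u] by (simp add: t'_def ac_simps)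
  have "int p dvd poly (cheb_V (p ^ s * k)) u"
  proof (rule ccontr)
    assume not_dvd: "\<not> int p dvd poly (cheb_V (p ^ s * k)) u"
    then have "int p dvd poly (cheb_V p) t'"
      using Suc.prems prime unfolding split by (simp add: prime_dvd_mult_iff)
    then have "int p dvd t'\<^sup>2 - 1"
      using assms(1,2) by (intro dvd_square_minus_one_if_dvd_cheb_V_prime)
    then have "int p dvd (u\<^sup>2 - 1) * (poly (cheb_V (p ^ s * k)) u)\<^sup>2"
      unfolding t'_def cheb_pell .
    with not_dvd assms(3) prime show False
      by (simp add: prime_dvd_mult_iff prime_dvd_power_iff)
  qed
  then show ?case
    by (rule Suc.IH)
qed simp

lemma prime_power_dvd_cheb_V_prime_power_mult:
  assumes "prime p" and "p > 3" and "\<not> int p dvd u\<^sup>2 - 1"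
    and "int p dvd poly (cheb_V (p ^ s * k)) u"
  shows "int p ^ Suc s dvd poly (cheb_V (p ^ s * k)) u"
proof -
  have "odd p"
    using assms prime_odd_nat by auto
  with assms(1) have k: "int p dvd poly (cheb_V k) u"
    using assms(3,4) by (rule dvd_cheb_V_if_dvd_cheb_V_prime_power_mult)
  define t' where "t' = poly (cheb_T k) u"
  have "int p dvd t'\<^sup>2 - 1"
    using k unfolding t'_def cheb_pell by (simp add: power2_eq_square)
  then have "[poly (cheb_V (p ^ s)) t' = int p ^ s] (mod int p ^ Suc s)"
    by (rule cheb_V_prime_power_cong[OF assms(1,2)])
  then have "[poly (cheb_V (p ^ s)) t' = int p ^ s] (mod int p ^ s)"
    by (rule cong_dvd_modulus) (simp add: le_imp_power_dvd)
  then have "int p ^ s dvd poly (cheb_V (p ^ s)) t'"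
    by (simp add: cong_dvd_iff)
  with k have "int p * int p ^ s dvd poly (cheb_V k) u * poly (cheb_V (p ^ s)) t'"
    by (rule mult_dvd_mono)
  also have "poly (cheb_V k) u * poly (cheb_V (p ^ s)) t' = poly (cheb_V (p ^ s * k)) u"
    using cheb_V_mult[of k "p ^ s" u] by (simp add: t'_def mult.commute)
  finally show ?thesis
    by simp
qed

lemma cheb_V_prime_power_mult_cong:
  assumes "prime p" and "p > 3" and "int p dvd u\<^sup>2 - 1"
  shows "[poly (cheb_V (p ^ s * k)) u = int p ^ s * poly (cheb_V k) u] (mod int p ^ Suc s)"
proof -
  define t' where "t' = poly (cheb_T k) u"
  have "int p dvd t'\<^sup>2 - 1"
    using assms(3) unfolding t'_def cheb_pell by simp
  then have "[poly (cheb_V (p ^ s)) t' = int p ^ s] (mod int p ^ Suc s)"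
    by (rule cheb_V_prime_power_cong[OF assms(1,2)])
  then have "[poly (cheb_V k) u * poly (cheb_V (p ^ s)) t'
      = poly (cheb_V k) u * int p ^ s] (mod int p ^ Suc s)"
    by (rule cong_scalar_left)
  then show ?thesis
    using cheb_V_mult[of k "p ^ s" u] by (simp add: t'_def ac_simps)
qed

section \<open>Lifting the fixed point\<close>

lemma power_dvd_by_steps:
  fixes q j :: "'a::comm_semiring_1"
  assumes "\<And>s. s < w \<Longrightarrow> q ^ s dvd j \<Longrightarrow> q ^ Suc s dvd j"
  shows "q ^ w dvd j"
proof -
  have "s \<le> w \<Longrightarrow> q ^ s dvd j" for s
    by (induction s) (use assms in auto)
  then show ?thesis
    by simp
qed

lemma odd_prime_power_dvd_double_iff:
  assumes "odd p"
  shows "int p ^ e dvd 2 * a \<longleftrightarrow> int p ^ e dvd a"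
  using assms by (simp add: coprime_dvd_mult_right_iff)

(* "Unramified" is the case where p does not divide x^2 - 1, "ramified" the case x = +-1 mod p. *)

lemma index_step_unramified:
  assumes "prime p" and "p > 3" and "\<not> int p dvd x\<^sup>2 - 1" and "int p dvd poly (cheb_V j) x"
    and "p ^ s dvd j" and "int p ^ Suc s dvd a * poly (cheb_V j) x + 2 * int j"
  shows "p ^ Suc s dvd j"
proof -
  obtain k where j: "j = p ^ s * k"
    using assms(5) by blast
  have "int p ^ Suc s dvd poly (cheb_V j) x"
    unfolding j using assms(1-3) assms(4)[unfolded j] by (rule prime_power_dvd_cheb_V_prime_power_mult)
  then have "int p ^ Suc s dvd 2 * int j"
    using assms(6) by (metis dvd_add_right_iff dvd_mult2 mult.commute)
  moreover have "odd p"
    using assms prime_odd_nat by auto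
  ultimately have "int p ^ Suc s dvd int j"
    using odd_prime_power_dvd_double_iff by blast
  then show ?thesis
    by (metis of_nat_power int_dvd_int_iff)
qed

lemma cong_mult_cheb_V_at_unit:
  fixes \<sigma> :: int
  assumes "\<sigma>\<^sup>2 = 1" and "[x = \<sigma>] (mod m)" and "[a * \<sigma> ^ Suc j = 2] (mod m)"
    and "even j \<longleftrightarrow> even k"
  shows "[a * poly (cheb_V k) x = 2 * int k] (mod m)"
proof -
  have "[poly (cheb_V k) x = \<sigma> ^ Suc j * int k] (mod m)"
    using cong_poly[OF assms(2), of "cheb_V k"] poly_cheb_at_unit[OF assms(1), of k] assms(4)
    by (simp add: power_unit_parity[OF assms(1)])
  then have "[a * poly (cheb_V k) x = (a * \<sigma> ^ Suc j) * int k] (mod m)"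
    by (metis cong_scalar_left mult.assoc)
  also have "[(a * \<sigma> ^ Suc j) * int k = 2 * int k] (mod m)"
    using assms(3) by (rule cong_scalar_right)
  finally show ?thesis .
qed

lemma index_step_ramified:
  fixes \<sigma> :: int
  assumes "prime p" and "p > 3" and "\<sigma>\<^sup>2 = 1" and "[x = \<sigma>] (mod int p)"
    and "[a * \<sigma> ^ Suc j = 2] (mod int p)"
    and "p ^ s dvd j" and "int p ^ Suc s dvd a * poly (cheb_V j) x + 2 * int j"
  shows "p ^ Suc s dvd j"
proof -
  obtain k where j: "j = p ^ s * k"
    using assms(6) by blast
  have odd_p: "odd p"
    using assms prime_odd_nat by auto
  have "[poly (cheb_V j) x = int p ^ s * poly (cheb_V k) x] (mod int p ^ Suc s)"
    unfolding j using assms(1,2) dvd_square_minus_one_if_cong_unit[OF assms(3,4)]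
    by (rule cheb_V_prime_power_mult_cong)
  then have "[a * poly (cheb_V j) x + 2 * int j
      = a * (int p ^ s * poly (cheb_V k) x) + 2 * int j] (mod int p ^ Suc s)"
    by (rule cong_add[OF cong_scalar_left cong_refl])
  also have "a * (int p ^ s * poly (cheb_V k) x) + 2 * int j
      = int p ^ s * (a * poly (cheb_V k) x + 2 * int k)"
    by (simp add: j algebra_simps)
  finally have "[a * poly (cheb_V j) x + 2 * int j
      = int p ^ s * (a * poly (cheb_V k) x + 2 * int k)] (mod int p ^ Suc s)" .
  then have "int p ^ s * int p dvd int p ^ s * (a * poly (cheb_V k) x + 2 * int k)"
    using assms(7) by (simp add: cong_dvd_iff mult.commute)
  then have "[a * poly (cheb_V k) x + 2 * int k = 0] (mod int p)"
    using assms(1) by (simp add: cong_0_iff prime_gt_0_nat)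
  moreover have "[a * poly (cheb_V k) x = 2 * int k] (mod int p)"
    by (rule cong_mult_cheb_V_at_unit[OF assms(3-5)]) (use odd_p in \<open>simp add: j\<close>)
  then have "[a * poly (cheb_V k) x + 2 * int k = 2 * int k + 2 * int k] (mod int p)"
    by (rule cong_add) simp
  ultimately have "int p dvd 2 * (2 * int k)"
    by (metis cong_0_iff cong_sym cong_trans mult_2)
  then have "int p dvd int k"
    using odd_prime_power_dvd_double_iff[OF odd_p, of 1 "2 * int k"]
      odd_prime_power_dvd_double_iff[OF odd_p, of 1 "int k"] by simp
  then show ?thesis
    unfolding j by (simp add: mult_dvd_mono)
qed

lemma cheb_V_lift_unramified:
  assumes "prime p" and "p > 3" and "\<not> int p dvd x\<^sup>2 - 1" and "int p dvd poly (cheb_V j) x"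
    and "int p ^ w dvd a * poly (cheb_V j) x + 2 * int j" and "[y = x] (mod int p)"
  shows "int p ^ Suc w dvd poly (cheb_V j) y"
proof -
  have "p ^ w dvd j"
  proof (rule power_dvd_by_steps)
    fix s
    assume "s < w" and "p ^ s dvd j"
    moreover have "int p ^ Suc s dvd int p ^ w"
      using \<open>s < w\<close> by (intro le_imp_power_dvd) simp
    ultimately show "p ^ Suc s dvd j"
      using assms(1-5) index_step_unramified dvd_trans by blast
  qed
  then obtain k where j: "j = p ^ w * k" ..
  have "[y\<^sup>2 - 1 = x\<^sup>2 - 1] (mod int p)"
    using assms(6) by (intro cong_diff cong_pow) simp_all
  then have "\<not> int p dvd y\<^sup>2 - 1"
    using assms(3) by (simp add: cong_dvd_iff)
  moreover have "int p dvd poly (cheb_V j) y"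
    using cong_dvd_iff[OF cong_poly[OF assms(6), of "cheb_V j"]] assms(4) by simp
  ultimately show ?thesis
    unfolding j using assms(1,2) by (intro prime_power_dvd_cheb_V_prime_power_mult) (simp_all add: j)
qed

lemma cheb_V_lift_ramified:
  fixes \<sigma> :: int
  assumes "prime p" and "p > 3" and "\<sigma>\<^sup>2 = 1" and "[x = \<sigma>] (mod int p)"
    and "[a * \<sigma> ^ Suc j = 2] (mod int p)"
    and "int p ^ w dvd a * poly (cheb_V j) x + 2 * int j" and "[y = x] (mod int p)"
  shows "int p ^ w dvd poly (cheb_V j) y"
proof -
  have "p ^ w dvd j"
  proof (rule power_dvd_by_steps)
    fix s
    assume "s < w" and "p ^ s dvd j"
    moreover have "int p ^ Suc s dvd int p ^ w"
      using \<open>s < w\<close> by (intro le_imp_power_dvd) simp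
    ultimately show "p ^ Suc s dvd j"
      using assms(1-6) index_step_ramified dvd_trans by blast
  qed
  then obtain k where j: "j = p ^ w * k" ..
  have "int p dvd y\<^sup>2 - 1"
    using assms(3) cong_trans[OF assms(7,4)] by (rule dvd_square_minus_one_if_cong_unit)
  with assms(1,2) have "[poly (cheb_V j) y = int p ^ w * poly (cheb_V k) y] (mod int p ^ Suc w)"
    unfolding j by (rule cheb_V_prime_power_mult_cong)
  then have "[poly (cheb_V j) y = int p ^ w * poly (cheb_V k) y] (mod int p ^ w)"
    by (rule cong_dvd_modulus) (simp add: le_imp_power_dvd)
  then show ?thesis
    by (simp add: cong_dvd_iff)
qed

lemma cong_unit_if_dvd_square_minus_one:
  assumes "prime p" and "int p dvd x\<^sup>2 - 1"
  obtains \<sigma> :: int where "\<sigma>\<^sup>2 = 1" and "[x = \<sigma>] (mod int p)"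
proof -
  have "int p dvd (x - 1) * (x - (- 1))"
    using assms(2) by (simp add: power2_eq_square algebra_simps)
  then have "int p dvd x - 1 \<or> int p dvd x - (- 1)"
    using assms(1) by (simp add: prime_dvd_mult_iff)
  then show ?thesis
    using that[of 1] that[of "- 1"] by (auto simp: cong_iff_dvd_diff)
qed

lemma dvd_cheb_odd_derivative_split:
  assumes "m dvd int (Suc (2 * b)) * poly (cheb_V (Suc (2 * b))) x - 1"
  shows "m dvd (- 2 * int (Suc (2 * b)) * poly (cheb_T b) x) * poly (cheb_V (Suc b)) x + 2 * int (Suc b)"
    and "m dvd (2 * int (Suc (2 * b)) * poly (cheb_T (Suc b)) x) * poly (cheb_V b) x + 2 * int b"
proof -
  have split_Suc_b: "(- 2 * int (Suc (2 * b)) * poly (cheb_T b) x) * poly (cheb_V (Suc b)) x + 2 * int (Suc b)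
      = - (int (Suc (2 * b)) * poly (cheb_V (Suc (2 * b))) x - 1)"
    by (simp only: cheb_V_odd(1)) (simp add: algebra_simps)
  show "m dvd (- 2 * int (Suc (2 * b)) * poly (cheb_T b) x) * poly (cheb_V (Suc b)) x + 2 * int (Suc b)"
    unfolding split_Suc_b dvd_minus_iff by (rule assms)
  have split_b: "(2 * int (Suc (2 * b)) * poly (cheb_T (Suc b)) x) * poly (cheb_V b) x + 2 * int b
      = int (Suc (2 * b)) * poly (cheb_V (Suc (2 * b))) x - 1"
    by (simp only: cheb_V_odd(2)) (simp add: algebra_simps)
  show "m dvd (2 * int (Suc (2 * b)) * poly (cheb_T (Suc b)) x) * poly (cheb_V b) x + 2 * int b"
    unfolding split_b by (rule assms)
qed

lemma dvd_cheb_T_odd_minus_id: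
  assumes "m dvd (y\<^sup>2 - 1) * poly (cheb_V (Suc b)) y \<or> m dvd (y\<^sup>2 - 1) * poly (cheb_V b) y"
  shows "m dvd poly (cheb_T (Suc (2 * b))) y - y"
  using assms unfolding cheb_T_odd_minus_id by (metis dvd_mult dvd_mult2 mult.assoc mult.commute)

lemma cheb_T_odd_lift_unramified:
  assumes "prime p" and "p > 3" and "\<not> int p dvd x\<^sup>2 - 1"
    and "[poly (cheb_T (Suc (2 * b))) x = x] (mod int p)"
    and "int p ^ w dvd int (Suc (2 * b)) * poly (cheb_V (Suc (2 * b))) x - 1"
    and "[y = x] (mod int p)"
  shows "int p ^ Suc w dvd poly (cheb_T (Suc (2 * b))) y - y"
proof -
  have "\<not> int p dvd 2"
    using assms(2) by (auto dest: zdvd_imp_le)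
  moreover have "int p dvd 2 * (x\<^sup>2 - 1) * poly (cheb_V (Suc b)) x * poly (cheb_V b) x"
    using assms(4) unfolding cong_iff_dvd_diff cheb_T_odd_minus_id .
  moreover have "prime (int p)"
    using assms(1) by simp
  ultimately have "int p dvd poly (cheb_V (Suc b)) x \<or> int p dvd poly (cheb_V b) x"
    using assms(3) by (metis prime_dvd_mult_iff)
  then have "int p ^ Suc w dvd poly (cheb_V (Suc b)) y \<or> int p ^ Suc w dvd poly (cheb_V b) y"
    using cheb_V_lift_unramified[OF assms(1-3) _ dvd_cheb_odd_derivative_split(1)[OF assms(5)] assms(6)]
      cheb_V_lift_unramified[OF assms(1-3) _ dvd_cheb_odd_derivative_split(2)[OF assms(5)] assms(6)]
    by blast
  then show ?thesis
    by (intro dvd_cheb_T_odd_minus_id) (auto intro: dvd_mult)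
qed

lemma cheb_T_odd_lift_ramified:
  assumes "prime p" and "p > 3" and "int p dvd x\<^sup>2 - 1" and "w \<ge> 1"
    and "int p ^ w dvd int (Suc (2 * b)) * poly (cheb_V (Suc (2 * b))) x - 1"
    and "[y = x] (mod int p)"
  shows "int p ^ Suc w dvd poly (cheb_T (Suc (2 * b))) y - y"
proof -
  define n where "n = Suc (2 * b)"
  obtain \<sigma> :: int where \<sigma>: "\<sigma>\<^sup>2 = 1" and x\<sigma>: "[x = \<sigma>] (mod int p)"
    using cong_unit_if_dvd_square_minus_one[OF assms(1,3)] .
  have \<sigma>_even: "\<sigma> ^ m = 1" if "even m" for m
    using power_unit_parity[OF \<sigma>] that by simp
  have \<sigma>_T: "[poly (cheb_T m) x = \<sigma> ^ m] (mod int p)" for m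
    using cong_poly[OF x\<sigma>, of "cheb_T m"] poly_cheb_at_unit[OF \<sigma>, of m] by simp
  have "int p dvd int p ^ w"
    using assms(4) by (simp add: dvd_power)
  with assms(5) have "[int n * poly (cheb_V n) x = 1] (mod int p)"
    unfolding n_def by (simp add: cong_iff_dvd_diff dvd_trans)
  moreover have "[poly (cheb_V n) x = int n] (mod int p)"
    using cong_poly[OF x\<sigma>, of "cheb_V n"] poly_cheb_at_unit[OF \<sigma>, of n] \<sigma>_even[of "Suc n"]
    by (simp add: n_def)
  ultimately have "[int n * int n = 1] (mod int p)"
    by (metis cong_scalar_left cong_sym cong_trans)
  then have "int p dvd 2 * (2 * (int b * int (Suc b)))"
    by (simp add: cong_iff_dvd_diff n_def algebra_simps)
  moreover have prime: "prime (int p)"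
    using assms(1) by simp
  moreover have "\<not> int p dvd 2"
    using assms(2) by (auto dest: zdvd_imp_le)
  ultimately have "int p dvd int b \<or> int p dvd int (Suc b)"
    by (metis prime_dvd_mult_iff)
  then have "int p ^ w dvd poly (cheb_V b) y \<or> int p ^ w dvd poly (cheb_V (Suc b)) y"
  proof
    assume "int p dvd int b"
    then have "[int n = 1] (mod int p)"
      by (simp add: n_def cong_iff_dvd_diff)
    then have "[2 * int n * poly (cheb_T (Suc b)) x * \<sigma> ^ Suc b
        = 2 * 1 * \<sigma> ^ Suc b * \<sigma> ^ Suc b] (mod int p)"
      by (intro cong_mult cong_scalar_left \<sigma>_T cong_refl) simp
    also have "2 * 1 * \<sigma> ^ Suc b * \<sigma> ^ Suc b = 2"
      using \<sigma>_even[of "Suc b + Suc b"] by (simp add: power_add mult_ac)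
    finally show ?thesis
      using cheb_V_lift_ramified[OF assms(1,2) \<sigma> x\<sigma> _
          dvd_cheb_odd_derivative_split(2)[OF assms(5)] assms(6)]
      unfolding n_def by blast
  next
    assume "int p dvd int (Suc b)"
    moreover have "int n - (- 1) = 2 * int (Suc b)"
      by (simp add: n_def)
    ultimately have "[int n = - 1] (mod int p)"
      unfolding cong_iff_dvd_diff by (metis dvd_mult)
    then have "[- 2 * int n * poly (cheb_T b) x * \<sigma> ^ Suc (Suc b)
        = - 2 * (- 1) * \<sigma> ^ b * \<sigma> ^ Suc (Suc b)] (mod int p)"
      by (intro cong_mult cong_scalar_left \<sigma>_T cong_refl) simp
    also have "- 2 * (- 1) * \<sigma> ^ b * \<sigma> ^ Suc (Suc b) = 2"
      using \<sigma>_even[of "b + Suc (Suc b)"] by (simp add: power_add mult_ac)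
    finally show ?thesis
      using cheb_V_lift_ramified[OF assms(1,2) \<sigma> x\<sigma> _
          dvd_cheb_odd_derivative_split(1)[OF assms(5)] assms(6)]
      unfolding n_def by blast
  qed
  moreover have "int p dvd y\<^sup>2 - 1"
    using \<sigma> cong_trans[OF assms(6) x\<sigma>] by (rule dvd_square_minus_one_if_cong_unit)
  ultimately show ?thesis
    by (intro dvd_cheb_T_odd_minus_id) (auto intro: mult_dvd_mono)
qed

theorem lemma6:
  fixes p n w h t :: nat and x :: int
  assumes "prime p" and "p > 3"
    and "n > 1" and "coprime n p" and "coprime n (p^2 - 1)"
    and "w \<ge> 1"
    and "0 \<le> x" and "x \<le> int p - 1"
    and "[poly (cheb_T n) x = x] (mod int p)"
    and "[poly (pderiv (cheb_T n)) x = 1] (mod int p ^ w)"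
    and "1 \<le> t" and "t \<le> w + 1"
  shows "[poly (cheb_T n) (x + int h * int p) = x + int h * int p] (mod int p ^ t)"
proof -
  have "odd p"
    using assms(1,2) prime_odd_nat by auto
  then have "even (p\<^sup>2 - 1)"
    by simp
  then have "odd n"
    using coprime_common_divisor[OF assms(5), of 2] by auto
  then obtain b where n: "n = Suc (2 * b)"
    by (auto elim: oddE)
  define y where "y = x + int h * int p"
  have y: "[y = x] (mod int p)"
    by (simp add: y_def cong_iff_dvd_diff)
  have deriv: "int p ^ w dvd int n * poly (cheb_V n) x - 1"
    using assms(10) by (simp add: pderiv_cheb_T cong_iff_dvd_diff)
  have "int p ^ Suc w dvd poly (cheb_T n) y - y"
  proof (cases "int p dvd x\<^sup>2 - 1")
    case True
    from assms(1,2) True assms(6) deriv y show ?thesis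
      unfolding n by (rule cheb_T_odd_lift_ramified)
  next
    case False
    from assms(1,2) False assms(9) deriv y show ?thesis
      unfolding n by (rule cheb_T_odd_lift_unramified)
  qed
  moreover have "int p ^ t dvd int p ^ Suc w"
    using assms(12) by (intro le_imp_power_dvd) simp
  ultimately show ?thesis
    unfolding y_def[symmetric] cong_iff_dvd_diff by (rule dvd_trans[rotated])
qed

end
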